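(* Let $H$ be a separable complex Hilbert space, $(\Omega,\mu)$ a measure space with positive measure, and let $K\in B(H)$ have closed range. Let $F:\Omega\to H$ be a Parseval continuous $K$-frame of $H$ with analysis operator $T$, and let $G:\Omega\to H$ be weakly measurable. Then $G$ is a dual continuous $K$-Bessel sequence of $F$ if and only if there exists $\varphi\in B(H,L^2(\Omega,\mu))$ such that $T^{\ast}\varphi=0$ and $(\varphi f)(\omega)=\langle f,G(\omega)-K^{\dagger}F(\omega)\rangle$ for all $f\in H$ and all $\omega\in\Omega$.
   Context: A map $F:\Omega\to H$ is weakly measurable if $\omega\mapsto\langle f,F(\omega)\rangle$ is measurable for every $f\in H$. A continuous Bessel sequence is a weakly measurable $G$ with $\int_\Omega|\langle f,G(\omega)\rangle|^2\,d\mu(\omega)\le B\|f\|^2$ for all $f\in H$, for some $B>0$. A Parseval continuous $K$-frame is a weakly measurable $F$ with $\int_\Omega|\langle f,F(\omega)\rangle|^2\,d\mu(\omega)=\|K^{\ast}f\|^2$ for all $f\in H$. The analysis operator of $F$ is $T:H\to L^2(\Omega,\mu)$, $Tf=\{\langle f,F(\omega)\rangle\}_{\omega}$, and $T^{\ast}c=\int_\Omega c(\omega)F(\omega)\,d\mu(\omega)$. A dual continuous $K$-Bessel sequence of $F$ is a continuous Bessel sequence $G$ such that $Kf=\int_\Omega\langle f,G(\omega)\rangle F(\omega)\,d\mu(\omega)$ for all $f\in H$. $K^{\dagger}$ denotes the Moore–Penrose pseudo-inverse of the closed-range operator $K$. *)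

theory Defs
  imports "HOL-Analysis.Analysis"
begin

class complex_vector = real_vector +
  fixes scaleC :: "complex \<Rightarrow> 'a \<Rightarrow> 'a" (infixr \<open>*\<^sub>C\<close> 75)
  assumes scaleC_add_right: "a *\<^sub>C (x + y) = a *\<^sub>C x + a *\<^sub>C y"
    and scaleC_add_left: "(a + b) *\<^sub>C x = a *\<^sub>C x + b *\<^sub>C x"
    and scaleC_scaleC: "a *\<^sub>C (b *\<^sub>C x) = (a * b) *\<^sub>C x"
    and scaleC_one: "1 *\<^sub>C x = x"
    and scaleR_scaleC: "scaleR r = scaleC (complex_of_real r)"

class complex_normed_vector = complex_vector + real_normed_vector +
  assumes norm_scaleC: "norm (a *\<^sub>C x) = cmod a * norm x"

class complex_inner = complex_normed_vector +
  fixes cinner :: "'a \<Rightarrow> 'a \<Rightarrow> complex"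
  assumes cinner_commute: "cinner x y = cnj (cinner y x)"
    and cinner_add_left: "cinner (x + y) z = cinner x z + cinner y z"
    and cinner_scaleC_left: "cinner (a *\<^sub>C x) y = a * cinner x y"
    and cinner_self: "cinner x x = complex_of_real ((norm x)\<^sup>2)"

text \<open>Separable complex Hilbert space: complete, second countable (= separable for metric spaces).\<close>
class chilbert_space = complex_inner + complete_space + second_countable_topology

definition bounded_clinear :: "('a::complex_normed_vector \<Rightarrow> 'b::complex_normed_vector) \<Rightarrow> bool" where
  "bounded_clinear A \<longleftrightarrow>
     (\<forall>x y. A (x + y) = A x + A y) \<and> (\<forall>c x. A (c *\<^sub>C x) = c *\<^sub>C A x) \<and>
     (\<exists>C. \<forall>x. norm (A x) \<le> norm x * C)"

definition cadjoint :: "('a::complex_inner \<Rightarrow> 'b::complex_inner) \<Rightarrow> ('b \<Rightarrow> 'a)" where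
  "cadjoint A = (THE B. \<forall>x y. cinner (A x) y = cinner x (B y))"

definition selfadjoint_op :: "('a::complex_inner \<Rightarrow> 'a) \<Rightarrow> bool" where
  "selfadjoint_op A \<longleftrightarrow> (\<forall>x y. cinner (A x) y = cinner x (A y))"

definition mp_pinv :: "('a::chilbert_space \<Rightarrow> 'a) \<Rightarrow> ('a \<Rightarrow> 'a)" where
  "mp_pinv K = (THE B. bounded_clinear B \<and> K \<circ> B \<circ> K = K \<and> B \<circ> K \<circ> B = B \<and>
                       selfadjoint_op (K \<circ> B) \<and> selfadjoint_op (B \<circ> K))"

definition weakly_measurable :: "'a measure \<Rightarrow> ('a \<Rightarrow> 'h::complex_inner) \<Rightarrow> bool" where
  "weakly_measurable M F \<longleftrightarrow> (\<forall>f. (\<lambda>\<omega>. cinner f (F \<omega>)) \<in> borel_measurable M)"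

definition cont_bessel :: "'a measure \<Rightarrow> ('a \<Rightarrow> 'h::complex_inner) \<Rightarrow> bool" where
  "cont_bessel M G \<longleftrightarrow> weakly_measurable M G \<and>
     (\<exists>B>0. \<forall>f. (\<integral>\<^sup>+ \<omega>. ennreal ((cmod (cinner f (G \<omega>)))\<^sup>2) \<partial>M) \<le> ennreal (B * (norm f)\<^sup>2))"

definition parseval_cont_K_frame :: "'a measure \<Rightarrow> ('h::chilbert_space \<Rightarrow> 'h) \<Rightarrow> ('a \<Rightarrow> 'h) \<Rightarrow> bool" where
  "parseval_cont_K_frame M K F \<longleftrightarrow> weakly_measurable M F \<and>
     (\<forall>f. (\<integral>\<^sup>+ \<omega>. ennreal ((cmod (cinner f (F \<omega>)))\<^sup>2) \<partial>M) = ennreal ((norm (cadjoint K f))\<^sup>2))"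

text \<open>Synthesis operator T* c = \<integral> c(\<omega>) F(\<omega>) d\<mu>(\<omega>) (weak integral):
  the vector x with <x,h> = \<integral> c(\<omega>) <F(\<omega>),h> d\<mu> for all h.\<close>
definition synth_op :: "'a measure \<Rightarrow> ('a \<Rightarrow> 'h::chilbert_space) \<Rightarrow> ('a \<Rightarrow> complex) \<Rightarrow> 'h" where
  "synth_op M F c = (THE x. \<forall>h. cinner x h = (\<integral> \<omega>. c \<omega> * cinner (F \<omega>) h \<partial>M))"

definition dual_cont_K_bessel :: "'a measure \<Rightarrow> ('h::chilbert_space \<Rightarrow> 'h) \<Rightarrow> ('a \<Rightarrow> 'h) \<Rightarrow> ('a \<Rightarrow> 'h) \<Rightarrow> bool" where
  "dual_cont_K_bessel M K F G \<longleftrightarrow> cont_bessel M G \<and>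
     (\<forall>f. K f = synth_op M F (\<lambda>\<omega>. cinner f (G \<omega>)))"

text \<open>Bounded linear operators H \<rightarrow> L^2(\<Omega>,\<mu>), with L^2 elements represented by functions
  (linearity holding almost everywhere, i.e. as elements of L^2).\<close>
definition bounded_to_L2 :: "'a measure \<Rightarrow> ('h::complex_normed_vector \<Rightarrow> 'a \<Rightarrow> complex) \<Rightarrow> bool" where
  "bounded_to_L2 M \<phi> \<longleftrightarrow>
     (\<forall>f. \<phi> f \<in> borel_measurable M) \<and>
     (\<forall>f g. AE \<omega> in M. \<phi> (f + g) \<omega> = \<phi> f \<omega> + \<phi> g \<omega>) \<and>
     (\<forall>c f. AE \<omega> in M. \<phi> (c *\<^sub>C f) \<omega> = c * \<phi> f \<omega>) \<and>
     (\<exists>C. \<forall>f. (\<integral>\<^sup>+ \<omega>. ennreal ((cmod (\<phi> f \<omega>))\<^sup>2) \<partial>M) \<le> ennreal ((C * norm f)\<^sup>2))"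

end

theory Submission
  imports Defs
begin

text \<open>
  Write \<open>J = K\<^sup>\<dagger>\<close> and \<open>T\<close> for the analysis operator of \<open>F\<close>. Polarising the Parseval identity
  gives \<open>T\<^sup>* T = K K\<^sup>*\<close>, and \<open>K K\<^sup>* J\<^sup>* = K\<close> because \<open>J K\<close> is the orthogonal projection onto
  the range of \<open>K\<^sup>*\<close>; hence \<open>T\<^sup>* (T J\<^sup>* f) = K f\<close>. The operator
  \<open>\<phi> f = \<langle>f, G(\<cdot>) - J F(\<cdot>)\<rangle> = \<langle>f, G(\<cdot>)\<rangle> - T J\<^sup>* f\<close> therefore satisfies
  \<open>T\<^sup>* (\<phi> f) = T\<^sup>* \<langle>f, G(\<cdot>)\<rangle> - K f\<close>, which vanishes for all \<open>f\<close> exactly when \<open>G\<close> is a dual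
  of \<open>F\<close>; and since \<open>T J\<^sup>*\<close> is bounded into \<open>L\<^sup>2\<close>, \<open>\<phi>\<close> is bounded exactly when \<open>G\<close> is
  Bessel. That \<open>K\<^sup>\<dagger>\<close> exists as a bounded operator rests on the bounded inverse theorem for
  operators with closed range, a consequence of the Baire category theorem.
\<close>

interpretation complex_vector: vector_space "scaleC :: complex \<Rightarrow> 'a \<Rightarrow> 'a::complex_vector"
  by unfold_locales (simp_all add: scaleC_add_right scaleC_add_left scaleC_scaleC scaleC_one)

section \<open>Complex inner product spaces\<close>

lemma cinner_zero_left [simp]: "cinner 0 (y::'a::complex_inner) = 0"
  by (metis cinner_scaleC_left complex_vector.scale_zero_left mult_zero_left)

lemma cinner_zero_right [simp]: "cinner (x::'a::complex_inner) 0 = 0"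
  by (metis cinner_commute cinner_zero_left complex_cnj_zero)

lemma cinner_add_right: "cinner (x::'a::complex_inner) (y + z) = cinner x y + cinner x z"
  by (metis cinner_commute cinner_add_left complex_cnj_add)

lemma cinner_scaleC_right: "cinner (x::'a::complex_inner) (a *\<^sub>C y) = cnj a * cinner x y"
  by (metis cinner_commute cinner_scaleC_left complex_cnj_mult)

lemma cinner_minus_left: "cinner (- x::'a::complex_inner) y = - cinner x y"
  by (metis cinner_scaleC_left complex_vector.scale_minus_left complex_vector.scale_one mult_minus1)

lemma cinner_minus_right: "cinner (x::'a::complex_inner) (- y) = - cinner x y"
  by (metis cinner_commute cinner_minus_left complex_cnj_minus)

lemma cinner_diff_left: "cinner (x - y::'a::complex_inner) z = cinner x z - cinner y z"
  by (metis diff_conv_add_uminus cinner_add_left cinner_minus_left)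

lemma cinner_diff_right: "cinner (x::'a::complex_inner) (y - z) = cinner x y - cinner x z"
  by (metis diff_conv_add_uminus cinner_add_right cinner_minus_right)

lemma cinner_eq_zero_iff [simp]: "cinner (x::'a::complex_inner) x = 0 \<longleftrightarrow> x = 0"
  by (simp add: cinner_self)

lemma cinner_extensionality: "(\<And>z. cinner x z = cinner y z) \<Longrightarrow> (x::'a::complex_inner) = y"
  by (metis cinner_diff_left cinner_eq_zero_iff eq_iff_diff_eq_0)

lemma cinner_extensionality_right: "(\<And>z. cinner z x = cinner z y) \<Longrightarrow> (x::'a::complex_inner) = y"
  by (metis cinner_commute cinner_extensionality)

lemma norm_diff_square:
  "(norm (x - y::'a::complex_inner))\<^sup>2 = (norm x)\<^sup>2 + (norm y)\<^sup>2 - 2 * Re (cinner x y)"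
proof -
  have "cinner (x - y) (x - y) = cinner x x - cinner x y - cinner y x + cinner y y"
    by (simp add: cinner_diff_left cinner_diff_right)
  then show ?thesis
    by (simp add: cinner_self cinner_commute [of y x] complex_eq_iff)
qed

lemma norm_add_square:
  "(norm (x + y::'a::complex_inner))\<^sup>2 = (norm x)\<^sup>2 + (norm y)\<^sup>2 + 2 * Re (cinner x y)"
  using norm_diff_square [of x "- y"] by (simp add: cinner_minus_right)

lemma parallelogram_law:
  "(norm (x + y::'a::complex_inner))\<^sup>2 + (norm (x - y))\<^sup>2 = 2 * (norm x)\<^sup>2 + 2 * (norm y)\<^sup>2"
  by (simp add: norm_add_square norm_diff_square)

lemma norm_diff_scaleC_square:
  "(norm (x - c *\<^sub>C y::'a::complex_inner))\<^sup>2
     = (norm x)\<^sup>2 + (cmod c)\<^sup>2 * (norm y)\<^sup>2 - 2 * Re (cnj c * cinner x y)"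
  by (simp add: norm_diff_square norm_scaleC cinner_scaleC_right power_mult_distrib)

lemma cauchy_schwarz: "cmod (cinner (x::'a::complex_inner) y) \<le> norm x * norm y"
proof (cases "y = 0")
  case False
  define n where "n = (norm y)\<^sup>2"
  have n: "n > 0" using False by (simp add: n_def)
  define a where "a = cinner x y"
  define c where "c = a / complex_of_real n"
  have "0 \<le> (norm (x - c *\<^sub>C y))\<^sup>2" by simp
  also have "\<dots> = (norm x)\<^sup>2 + (cmod c)\<^sup>2 * n - 2 * Re (cnj c * a)"
    by (simp add: norm_diff_scaleC_square a_def n_def)
  also have "(cmod c)\<^sup>2 * n = (cmod a)\<^sup>2 / n"
    using n by (simp add: c_def norm_divide power_divide power2_eq_square)
  also have "cnj c * a = complex_of_real ((cmod a)\<^sup>2 / n)"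
    using complex_norm_square [of a] by (simp add: c_def mult.commute)
  finally have "(cmod a)\<^sup>2 \<le> (norm x * norm y)\<^sup>2"
    using n by (simp add: field_simps n_def power_mult_distrib)
  then show ?thesis
    unfolding a_def by (rule power2_le_imp_le) simp
qed simp

section \<open>Orthogonal projection onto closed subspaces\<close>

lemma midpoint_norm_diff_square_le:
  fixes x a b :: "'a::complex_inner"
  assumes "0 \<le> d" "d \<le> norm (x - (1/2) *\<^sub>R (a + b))"
  shows "(norm (a - b))\<^sup>2 \<le> 2 * (norm (x - a))\<^sup>2 + 2 * (norm (x - b))\<^sup>2 - 4 * d\<^sup>2"
proof -
  have "(x - a) + (x - b) = 2 *\<^sub>R (x - (1/2) *\<^sub>R (a + b))"
    by (simp add: algebra_simps scaleR_2)
  then have "(2 * d)\<^sup>2 \<le> (norm ((x - a) + (x - b)))\<^sup>2"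
    using assms by (simp add: power_mono)
  moreover have "(x - a) - (x - b) = - (a - b)" by simp
  ultimately show ?thesis
    using parallelogram_law [of "x - a" "x - b"] by (simp add: power_mult_distrib norm_minus_commute)
qed

lemma infdist_square_approachable:
  assumes "S \<noteq> {}" "e > 0"
  shows "\<exists>s\<in>S. (dist x s)\<^sup>2 < (infdist x S)\<^sup>2 + e"
proof (rule ccontr)
  assume "\<not> ?thesis"
  then have "sqrt ((infdist x S)\<^sup>2 + e) \<le> dist x s" if "s \<in> S" for s
    using that by (auto simp: not_less intro: real_le_lsqrt)
  then have "sqrt ((infdist x S)\<^sup>2 + e) \<le> infdist x S"
    unfolding infdist_notempty [OF assms(1)] using assms(1) by (intro cINF_greatest)
  moreover have "infdist x S < sqrt ((infdist x S)\<^sup>2 + e)"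
    using assms(2) infdist_nonneg real_less_rsqrt by simp
  ultimately show False by simp
qed

lemma convex_minimizing_sequence_Cauchy:
  fixes S :: "'a::complex_inner set"
  assumes "convex S" "0 \<le> d" "\<And>y. y \<in> S \<Longrightarrow> d \<le> norm (x - y)"
    and "\<And>n. s n \<in> S" "\<And>n. (norm (x - s n))\<^sup>2 < d\<^sup>2 + 1 / Suc n"
  shows "Cauchy s"
proof (rule metric_CauchyI)
  define e where "e n = 1 / real (Suc n)" for n
  have close: "(norm (s m - s n))\<^sup>2 \<le> 2 * e m + 2 * e n" for m n
  proof -
    have "(1/2) *\<^sub>R (s m + s n) \<in> S"
      using convexD [OF assms(1) assms(4) assms(4), of "1/2" "1/2" m n] by (simp add: scaleR_add_right)
    then show ?thesis
      using midpoint_norm_diff_square_le [OF assms(2,3)] assms(5) [of m] assms(5) [of n]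
      by (fastforce simp: e_def)
  qed
  fix \<epsilon> :: real assume "\<epsilon> > 0"
  then obtain N where N: "e N < \<epsilon>\<^sup>2 / 4"
    unfolding e_def using reals_Archimedean
    by (metis inverse_eq_divide zero_less_divide_iff zero_less_numeral zero_less_power)
  have "dist (s m) (s n) < \<epsilon>" if "N \<le> m" "N \<le> n" for m n
  proof -
    have "e m \<le> e N" "e n \<le> e N"
      using that by (auto simp: e_def intro!: divide_left_mono)
    then have "(norm (s m - s n))\<^sup>2 < \<epsilon>\<^sup>2" using close [of m n] N by linarith
    then show ?thesis using \<open>\<epsilon> > 0\<close> unfolding dist_norm by (metis power2_less_imp_less less_imp_le)
  qed
  then show "\<exists>M. \<forall>m\<ge>M. \<forall>n\<ge>M. dist (s m) (s n) < \<epsilon>" by blast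
qed

lemma closed_convex_nearest_point:
  fixes S :: "'a::chilbert_space set"
  assumes "convex S" "closed S" "S \<noteq> {}"
  obtains p where "p \<in> S" "\<And>s. s \<in> S \<Longrightarrow> norm (x - p) \<le> norm (x - s)"
proof -
  define d where "d = infdist x S"
  have d: "0 \<le> d" by (simp add: d_def infdist_nonneg)
  have d_le: "d \<le> norm (x - s)" if "s \<in> S" for s
    using infdist_le [OF that, of x] by (simp add: d_def dist_norm)
  have "\<forall>n. \<exists>s\<in>S. (norm (x - s))\<^sup>2 < d\<^sup>2 + 1 / Suc n"
    using infdist_square_approachable [OF assms(3)] by (simp add: d_def dist_norm)
  then obtain s where s: "\<And>n. s n \<in> S" "\<And>n. (norm (x - s n))\<^sup>2 < d\<^sup>2 + 1 / Suc n"
    by metis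
  then have "Cauchy s" by (intro convex_minimizing_sequence_Cauchy [OF assms(1) d d_le])
  then obtain p where p: "s \<longlonglongrightarrow> p" by (metis Cauchy_convergent convergent_def)
  have "p \<in> S" using closed_sequentially [OF \<open>closed S\<close> _ p] s(1) by blast
  have "(\<lambda>n. (norm (x - s n))\<^sup>2) \<longlonglongrightarrow> (norm (x - p))\<^sup>2"
    by (intro tendsto_intros p)
  moreover have "(\<lambda>n. d\<^sup>2 + 1 / Suc n) \<longlonglongrightarrow> d\<^sup>2 + 0"
    by (intro tendsto_intros LIMSEQ_Suc [OF lim_const_over_n])
  ultimately have "(norm (x - p))\<^sup>2 \<le> d\<^sup>2"
    using s(2) by (intro LIMSEQ_le [of _ _ "\<lambda>n. d\<^sup>2 + 1 / Suc n"]) (auto intro: less_imp_le)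
  then have "norm (x - p) \<le> d" using d by (rule power2_le_imp_le)
  then show ?thesis using \<open>p \<in> S\<close> d_le that by force
qed

lemma nearest_point_orthogonal:
  fixes S :: "'a::complex_inner set"
  assumes "complex_vector.subspace S" "p \<in> S" "\<And>s. s \<in> S \<Longrightarrow> norm (x - p) \<le> norm (x - s)"
    and "t \<in> S"
  shows "cinner (x - p) t = 0"
proof (cases "t = 0")
  case False
  define n where "n = (norm t)\<^sup>2"
  have n: "n > 0" using False by (simp add: n_def)
  define a where "a = cinner (x - p) t"
  define c where "c = a / complex_of_real n"
  have "p + c *\<^sub>C t \<in> S"
    using assms by (simp add: complex_vector.subspace_add complex_vector.subspace_scale)
  then have "norm (x - p) \<le> norm ((x - p) - c *\<^sub>C t)"
    using assms(3) by (simp add: diff_diff_eq)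
  then have "(norm (x - p))\<^sup>2 \<le> (norm ((x - p) - c *\<^sub>C t))\<^sup>2"
    by (rule power_mono) simp
  also have "\<dots> = (norm (x - p))\<^sup>2 + (cmod c)\<^sup>2 * n - 2 * Re (cnj c * a)"
    by (simp add: norm_diff_scaleC_square a_def n_def)
  also have "(cmod c)\<^sup>2 * n = (cmod a)\<^sup>2 / n"
    using n by (simp add: c_def norm_divide power_divide power2_eq_square)
  also have "cnj c * a = complex_of_real ((cmod a)\<^sup>2 / n)"
    using complex_norm_square [of a] by (simp add: c_def mult.commute)
  finally have "(cmod a)\<^sup>2 / n \<le> 0" by simp
  then show ?thesis using n by (simp add: a_def divide_le_0_iff)
qed simp

lemma closed_subspace_orthogonal_decomposition:
  fixes S :: "'a::chilbert_space set"
  assumes "complex_vector.subspace S" "closed S"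
  shows "\<exists>p\<in>S. \<forall>s\<in>S. cinner (x - p) s = 0"
proof -
  have "convex S"
    using assms(1) by (auto simp: convex_def scaleR_scaleC complex_vector.subspace_add
        complex_vector.subspace_scale)
  moreover have "S \<noteq> {}" using complex_vector.subspace_0 [OF assms(1)] by blast
  ultimately obtain p where "p \<in> S" "\<And>s. s \<in> S \<Longrightarrow> norm (x - p) \<le> norm (x - s)"
    using closed_convex_nearest_point assms(2) by blast
  then show ?thesis using nearest_point_orthogonal [OF assms(1)] by blast
qed

definition cproj :: "'a::chilbert_space set \<Rightarrow> 'a \<Rightarrow> 'a" where
  "cproj S x = (SOME p. p \<in> S \<and> (\<forall>s\<in>S. cinner (x - p) s = 0))"

locale closed_csubspace =
  fixes S :: "'a::chilbert_space set"
  assumes subspace: "complex_vector.subspace S" and closed: "closed S"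
begin

lemma cproj_spec: "cproj S x \<in> S \<and> (\<forall>s\<in>S. cinner (x - cproj S x) s = 0)"
  unfolding cproj_def
  by (rule someI_ex) (use closed_subspace_orthogonal_decomposition [OF subspace closed] in blast)

lemma cproj_in: "cproj S x \<in> S"
  using cproj_spec by blast

lemma cinner_minus_cproj: "s \<in> S \<Longrightarrow> cinner (x - cproj S x) s = 0"
  using cproj_spec by blast

lemma cproj_eqI:
  assumes "p \<in> S" "\<And>s. s \<in> S \<Longrightarrow> cinner (x - p) s = 0"
  shows "cproj S x = p"
proof -
  have "p - cproj S x \<in> S"
    by (intro complex_vector.subspace_diff subspace assms(1) cproj_in)
  moreover have "p - cproj S x = (x - cproj S x) - (x - p)" by simp
  ultimately have "cinner (p - cproj S x) (p - cproj S x) = 0"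
    by (metis assms(2) cinner_diff_left cinner_minus_cproj diff_self)
  then show ?thesis by simp
qed

lemma cproj_id: "x \<in> S \<Longrightarrow> cproj S x = x"
  by (rule cproj_eqI) auto

lemma cproj_add: "cproj S (x + y) = cproj S x + cproj S y"
proof (rule cproj_eqI)
  show "cproj S x + cproj S y \<in> S"
    by (intro complex_vector.subspace_add subspace cproj_in)
  have "x + y - (cproj S x + cproj S y) = (x - cproj S x) + (y - cproj S y)" by simp
  then show "cinner (x + y - (cproj S x + cproj S y)) s = 0" if "s \<in> S" for s
    using that by (simp only: cinner_add_left cinner_minus_cproj) simp
qed

lemma cproj_scaleC: "cproj S (c *\<^sub>C x) = c *\<^sub>C cproj S x"
proof (rule cproj_eqI)
  show "c *\<^sub>C cproj S x \<in> S"
    by (intro complex_vector.subspace_scale subspace cproj_in)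
  have "c *\<^sub>C x - c *\<^sub>C cproj S x = c *\<^sub>C (x - cproj S x)"
    by (simp add: complex_vector.scale_right_diff_distrib)
  then show "cinner (c *\<^sub>C x - c *\<^sub>C cproj S x) s = 0" if "s \<in> S" for s
    using that by (simp only: cinner_scaleC_left cinner_minus_cproj) simp
qed

lemma cinner_cproj_commute: "cinner (cproj S x) y = cinner x (cproj S y)"
proof -
  have "cinner (cproj S x) (y - cproj S y) = 0" "cinner (x - cproj S x) (cproj S y) = 0"
    using cinner_minus_cproj cproj_in by (metis cinner_commute complex_cnj_zero)+
  then show ?thesis by (simp add: cinner_diff_left cinner_diff_right)
qed

lemma norm_cproj_square:
  "(norm x)\<^sup>2 = (norm (cproj S x))\<^sup>2 + (norm (x - cproj S x))\<^sup>2"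
proof -
  have "cinner (cproj S x) (x - cproj S x) = 0"
    by (metis cinner_commute cinner_minus_cproj cproj_in complex_cnj_zero)
  then show ?thesis
    using norm_add_square [of "cproj S x" "x - cproj S x"] by simp
qed

lemma norm_cproj_le: "norm (cproj S x) \<le> norm x"
  by (rule power2_le_imp_le) (use norm_cproj_square [of x] in auto)

lemma norm_minus_cproj_le: "norm (x - cproj S x) \<le> norm x"
  by (rule power2_le_imp_le) (use norm_cproj_square [of x] in auto)

end

section \<open>Riesz representation and adjoints\<close>

lemma bounded_clinear_add: "bounded_clinear A \<Longrightarrow> A (x + y) = A x + A y"
  by (simp add: bounded_clinear_def)

lemma bounded_clinear_scaleC: "bounded_clinear A \<Longrightarrow> A (c *\<^sub>C x) = c *\<^sub>C A x"
  by (simp add: bounded_clinear_def)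

lemma bounded_clinear_pos_bound:
  assumes "bounded_clinear A"
  obtains C where "C > 0" "\<And>x. norm (A x) \<le> norm x * C"
proof -
  obtain C where C: "\<And>x. norm (A x) \<le> norm x * C"
    using assms by (auto simp: bounded_clinear_def)
  have "norm (A x) \<le> norm x * max C 1" for x
    by (metis C max.cobounded1 mult_left_mono norm_ge_zero order_trans)
  then show ?thesis using that [of "max C 1"] by simp
qed

lemma bounded_clinear_imp_bounded_linear: "bounded_clinear A \<Longrightarrow> bounded_linear A"
  unfolding bounded_clinear_def
  by (auto intro!: bounded_linear_intro simp: scaleR_scaleC)

lemma bounded_clinear_diff: "bounded_clinear A \<Longrightarrow> A (x - y) = A x - A y"
  by (rule linear_diff [OF bounded_linear.linear [OF bounded_clinear_imp_bounded_linear]])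

lemma riesz_representation:
  fixes L :: "'a::chilbert_space \<Rightarrow> complex"
  assumes add: "\<And>x y. L (x + y) = L x + L y" and scale: "\<And>c x. L (c *\<^sub>C x) = c * L x"
    and bound: "\<And>x. cmod (L x) \<le> norm x * C"
  shows "\<exists>z. \<forall>x. L x = cinner x z"
proof (cases "\<forall>x. L x = 0")
  case False
  then obtain u where u: "L u \<noteq> 0" by blast
  have "bounded_linear L"
    by (rule bounded_linear_intro [where K = C])
      (auto simp: add scaleR_scaleC scale bound scaleR_conv_of_real)
  then have "closed {x. L x = 0}"
    by (intro closed_Collect_eq continuous_on_const linear_continuous_on)
  moreover have L0: "L 0 = 0" using scale [of 0 0] by simp
  ultimately interpret kernel: closed_csubspace "{x. L x = 0}"
    by (unfold_locales) (auto simp: complex_vector.subspace_def add scale)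
  \<comment> \<open>the representing vector is a multiple of the part of u orthogonal to the kernel\<close>
  define w where "w = u - cproj {x. L x = 0} u"
  have Lw: "L w = L u"
    using kernel.cproj_in add [of w "cproj {x. L x = 0} u"] by (simp add: w_def)
  have w_orth: "cinner w s = 0" if "L s = 0" for s
    using kernel.cinner_minus_cproj that by (simp add: w_def)
  have w: "cinner w w \<noteq> 0" using Lw u L0 by auto
  have "L x = cinner x ((cnj (L w) / cnj (cinner w w)) *\<^sub>C w)" for x
  proof -
    have "L (x - (L x / L w) *\<^sub>C w) = 0"
      using add [of "x - (L x / L w) *\<^sub>C w" "(L x / L w) *\<^sub>C w"] scale Lw u by simp
    then have "cinner (x - (L x / L w) *\<^sub>C w) w = 0"
      by (metis cinner_commute complex_cnj_zero w_orth)
    then have "cinner x w = (L x / L w) * cinner w w"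
      by (simp add: cinner_diff_left cinner_scaleC_left)
    then show ?thesis using w Lw u by (simp add: cinner_scaleC_right)
  qed
  then show ?thesis by blast
qed (intro exI [of _ 0], simp)

lemma cadjoint_exists:
  fixes A :: "'a::chilbert_space \<Rightarrow> 'b::complex_inner"
  assumes "bounded_clinear A"
  shows "\<exists>!B. \<forall>x y. cinner (A x) y = cinner x (B y)"
proof -
  obtain C where C: "\<And>x. norm (A x) \<le> norm x * C"
    using assms by (auto simp: bounded_clinear_def)
  have "\<exists>z. \<forall>x. cinner (A x) y = cinner x z" for y
  proof (rule riesz_representation)
    show "cinner (A (x1 + x2)) y = cinner (A x1) y + cinner (A x2) y" for x1 x2
      by (simp add: bounded_clinear_add [OF assms] cinner_add_left)
    show "cinner (A (c *\<^sub>C x)) y = c * cinner (A x) y" for c x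
      by (simp add: bounded_clinear_scaleC [OF assms] cinner_scaleC_left)
    show "cmod (cinner (A x) y) \<le> norm x * (C * norm y)" for x
    proof -
      have "cmod (cinner (A x) y) \<le> norm (A x) * norm y" by (rule cauchy_schwarz)
      also have "\<dots> \<le> norm x * C * norm y" using C by (simp add: mult_right_mono)
      finally show ?thesis by (simp add: mult.assoc)
    qed
  qed
  then obtain B where "\<forall>y x. cinner (A x) y = cinner x (B y)" by metis
  moreover have "B1 = B2"
    if "\<forall>x y. cinner (A x) y = cinner x (B1 y)" "\<forall>x y. cinner (A x) y = cinner x (B2 y)" for B1 B2
    using that by (intro ext cinner_extensionality_right) metis
  ultimately show ?thesis by blast
qed

lemma cinner_cadjoint:
  fixes A :: "'a::chilbert_space \<Rightarrow> 'b::complex_inner"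
  assumes "bounded_clinear A"
  shows "cinner x (cadjoint A y) = cinner (A x) y"
  using theI' [OF cadjoint_exists [OF assms]] unfolding cadjoint_def by metis

lemma cinner_cadjoint_left:
  fixes A :: "'a::chilbert_space \<Rightarrow> 'b::complex_inner"
  assumes "bounded_clinear A"
  shows "cinner (cadjoint A y) x = cinner y (A x)"
  by (metis assms cinner_cadjoint cinner_commute)

lemma bounded_clinear_cadjoint:
  fixes A :: "'a::chilbert_space \<Rightarrow> 'b::complex_inner"
  assumes A: "bounded_clinear A"
  shows "bounded_clinear (cadjoint A)"
proof -
  obtain C where C: "C > 0" "\<And>x. norm (A x) \<le> norm x * C"
    using bounded_clinear_pos_bound [OF A] by blast
  let ?B = "cadjoint A"
  have "norm (?B y) \<le> norm y * C" for y
  proof -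
    have "(norm (?B y))\<^sup>2 = Re (cinner (A (?B y)) y)"
      using cinner_self [of "?B y"] by (simp add: cinner_cadjoint [OF A])
    also have "\<dots> \<le> norm (A (?B y)) * norm y"
      using complex_Re_le_cmod cauchy_schwarz order_trans by blast
    also have "\<dots> \<le> norm (?B y) * C * norm y"
      using C by (simp add: mult_right_mono)
    finally have "norm (?B y) * norm (?B y) \<le> norm (?B y) * (norm y * C)"
      by (simp add: power2_eq_square mult_ac)
    then show ?thesis
      using C by (cases "?B y = 0") auto
  qed
  moreover have "?B (x + y) = ?B x + ?B y" for x y
    by (rule cinner_extensionality_right) (simp add: cinner_cadjoint [OF A] cinner_add_right)
  moreover have "?B (c *\<^sub>C x) = c *\<^sub>C ?B x" for c x
    by (rule cinner_extensionality_right) (simp add: cinner_cadjoint [OF A] cinner_scaleC_right)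
  ultimately show ?thesis
    unfolding bounded_clinear_def by blast
qed

section \<open>Bounded preimages for operators with closed range\<close>

lemma closed_range_Baire_ball:
  fixes K :: "'a::real_normed_vector \<Rightarrow> 'b::banach"
  assumes closed: "closed (range K)"
  obtains n y0 r where "y0 \<in> range K" "r > 0"
    "\<And>y. y \<in> range K \<Longrightarrow> dist y0 y < r \<Longrightarrow> y \<in> closure (K ` cball 0 (real n))"
proof -
  define X where "X = top_of_set (range K)"
  define B where "B n = range K \<inter> closure (K ` cball 0 (real n))" for n
  \<comment> \<open>the closed sets B n cover the complete space range K, so one has interior by Baire\<close>
  have "\<exists>n. X interior_of B n \<noteq> {}"
  proof (rule ccontr)
    assume "\<not> ?thesis"
    then have "X interior_of \<Union>(range B) = {}"
      unfolding X_def B_def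
      by (intro Baire_category_alt completely_metrizable_space_closedin
          completely_metrizable_space_euclidean disjI1) (auto simp: closed closedin_closed_Int)
    moreover have "\<Union>(range B) = topspace X"
    proof
      show "topspace X \<subseteq> \<Union>(range B)"
      proof
        fix y assume "y \<in> topspace X"
        then obtain x where y: "y = K x" by (auto simp: X_def)
        obtain n where "norm x \<le> real n" using real_arch_simple by blast
        then have "y \<in> B n" using y by (auto simp: B_def intro: closure_subset [THEN subsetD])
        then show "y \<in> \<Union>(range B)" by blast
      qed
    qed (auto simp: X_def B_def)
    moreover have "topspace X \<noteq> {}" by (simp add: X_def)
    ultimately show False using interior_of_topspace [of X] by simp
  qed
  then obtain n y0 T where T: "openin X T" "y0 \<in> T" "T \<subseteq> B n"
    by (auto simp: interior_of_def)
  then obtain V where V: "open V" "T = range K \<inter> V" by (auto simp: X_def openin_open)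
  then obtain r where r: "r > 0" "ball y0 r \<subseteq> V" using T(2) open_contains_ball by blast
  have "y \<in> closure (K ` cball 0 (real n))" if "y \<in> range K" "dist y0 y < r" for y
  proof -
    have "y \<in> T" using that r(2) V(2) by auto
    then show ?thesis using T(3) by (auto simp: B_def)
  qed
  moreover have "y0 \<in> range K" using T V by blast
  ultimately show ?thesis using that r(1) by blast
qed

lemma closed_range_preimage_approachable:
  fixes K :: "'a::real_normed_vector \<Rightarrow> 'b::banach"
  assumes K: "bounded_linear K" and closed: "closed (range K)"
  obtains C r where "r > 0"
    "\<And>y e. y \<in> range K \<Longrightarrow> norm y < r \<Longrightarrow> e > 0 \<Longrightarrow> \<exists>x. norm x \<le> C \<and> norm (K x - y) < e"
proof -
  interpret K: bounded_linear K by (rule K)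
  obtain n y0 r where y0: "y0 \<in> range K" and r: "r > 0"
    and ball: "\<And>y. y \<in> range K \<Longrightarrow> dist y0 y < r \<Longrightarrow> y \<in> closure (K ` cball 0 (real n))"
    using closed_range_Baire_ball [OF closed] by metis
  have near: "\<exists>x. norm x \<le> real n \<and> dist (K x) y < e"
    if "y \<in> range K" "dist y0 y < r" "e > 0" for y e
    using ball [OF that(1,2)] \<open>e > 0\<close> by (force simp: closure_approachable)
  \<comment> \<open>translate the ball around y0 to the origin, paying a factor 2 in the norm bound\<close>
  have "\<exists>x. norm x \<le> 2 * real n \<and> norm (K x - y) < e"
    if y: "y \<in> range K" "norm y < r" and e: "e > 0" for y e
  proof -
    have "y0 + y \<in> range K" using y0 y(1) by (auto simp flip: K.add)
    moreover have "dist y0 (y0 + y) < r" using y(2) by (simp add: dist_norm)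
    ultimately obtain x1 where x1: "norm x1 \<le> real n" "dist (K x1) (y0 + y) < e / 2"
      using near [of "y0 + y" "e / 2"] e by auto
    obtain x2 where x2: "norm x2 \<le> real n" "dist (K x2) y0 < e / 2"
      using near [of y0 "e / 2"] y0 r e by auto
    have "norm (x1 - x2) \<le> 2 * real n"
      using x1(1) x2(1) norm_triangle_ineq4 [of x1 x2] by linarith
    moreover have "K (x1 - x2) - y = (K x1 - (y0 + y)) - (K x2 - y0)" by (simp add: K.diff)
    then have "norm (K (x1 - x2) - y) \<le> norm (K x1 - (y0 + y)) + norm (K x2 - y0)"
      by (simp only: norm_triangle_ineq4)
    then have "norm (K (x1 - x2) - y) < e"
      using x1(2) x2(2) by (simp add: dist_norm)
    ultimately show ?thesis by blast
  qed
  then show ?thesis using that r by blast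
qed

lemma closed_range_approximate_preimage:
  fixes K :: "'a::real_normed_vector \<Rightarrow> 'b::banach"
  assumes K: "bounded_linear K" and closed: "closed (range K)"
  obtains A where "A > 0"
    "\<And>y. y \<in> range K \<Longrightarrow> \<exists>x. norm x \<le> A * norm y \<and> norm (y - K x) \<le> norm y / 2"
proof -
  interpret K: bounded_linear K by (rule K)
  obtain C r where r: "r > 0" and approx:
    "\<And>y e. y \<in> range K \<Longrightarrow> norm y < r \<Longrightarrow> e > 0 \<Longrightarrow> \<exists>x. norm x \<le> C \<and> norm (K x - y) < e"
    using closed_range_preimage_approachable [OF K closed] by metis
  define A where "A = 2 * \<bar>C\<bar> / r + 1"
  have A: "A > 0" using r by (simp add: A_def add_nonneg_pos)
  have "\<exists>x. norm x \<le> A * norm y \<and> norm (y - K x) \<le> norm y / 2" if "y \<in> range K" for y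
  proof (cases "y = 0")
    case False
    \<comment> \<open>rescale y into the ball of radius r, approximate there, and scale back\<close>
    define t where "t = r / (2 * norm y)"
    have t: "t > 0" using r False by (simp add: t_def)
    have "t *\<^sub>R y \<in> range K" using that by (metis K.scaleR rangeE rangeI)
    moreover have "norm (t *\<^sub>R y) < r" using t r False by (simp add: t_def)
    ultimately obtain x' where x': "norm x' \<le> C" "norm (K x' - t *\<^sub>R y) < r / 4"
      using approx r by (metis zero_less_divide_iff zero_less_numeral)
    define x where "x = (1 / t) *\<^sub>R x'"
    have "norm x = norm x' / t" using t by (simp add: x_def)
    also have "\<dots> \<le> \<bar>C\<bar> / t" using x'(1) t by (simp add: divide_right_mono)
    also have "\<dots> = 2 * \<bar>C\<bar> / r * norm y" using r False by (simp add: t_def field_simps)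
    also have "\<dots> \<le> A * norm y" by (simp add: A_def distrib_right)
    finally have nx: "norm x \<le> A * norm y" .
    have "y - K x = (1 / t) *\<^sub>R (t *\<^sub>R y - K x')"
      using t by (simp add: x_def K.scaleR scaleR_diff_right)
    then have "norm (y - K x) = norm (K x' - t *\<^sub>R y) / t"
      using t by (simp add: norm_minus_commute)
    also have "\<dots> \<le> (r / 4) / t" using x'(2) t by (intro divide_right_mono) auto
    also have "\<dots> = norm y / 2" using r False by (simp add: t_def field_simps)
    finally show ?thesis using nx by blast
  qed (intro exI [of _ 0], simp)
  then show ?thesis using that A by blast
qed

lemma summable_geometric_bound:
  fixes u :: "nat \<Rightarrow> 'a::banach"
  assumes "\<And>k. norm (u k) \<le> B * (1/2) ^ k"
  shows "summable u" "norm (suminf u) \<le> 2 * B"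
proof -
  have geometric: "summable (\<lambda>k. B * (1/2::real) ^ k)"
    by (intro summable_mult summable_geometric) simp
  then have norms: "summable (\<lambda>k. norm (u k))"
    by (rule summable_comparison_test [rotated]) (use assms in auto)
  then show "summable u" by (rule summable_norm_cancel)
  have "norm (suminf u) \<le> (\<Sum>k. norm (u k))" by (rule summable_norm [OF norms])
  also have "\<dots> \<le> (\<Sum>k. B * (1/2::real) ^ k)" by (rule suminf_le [OF assms norms geometric])
  also have "\<dots> = 2 * B" by (simp add: suminf_mult suminf_geometric [of "1/2::real"])
  finally show "norm (suminf u) \<le> 2 * B" .
qed

lemma iterated_approximate_preimage:
  fixes K :: "'a::banach \<Rightarrow> 'b::real_normed_vector"
  assumes K: "bounded_linear K" and A: "0 \<le> A"
    and g: "\<And>y. y \<in> range K \<Longrightarrow> norm (g y) \<le> A * norm y \<and> norm (y - K (g y)) \<le> norm y / 2"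
    and y: "y \<in> range K"
  shows "\<exists>x. K x = y \<and> norm x \<le> 2 * A * norm y"
proof -
  interpret K: bounded_linear K by (rule K)
  \<comment> \<open>correct the residual again and again: the corrections form a geometric series\<close>
  define res where "res = rec_nat y (\<lambda>_ r. r - K (g r))"
  have res_0: "res 0 = y" and res_Suc: "res (Suc k) = res k - K (g (res k))" for k
    by (simp_all add: res_def)
  have res_range: "res k \<in> range K" for k
  proof (induction k)
    case (Suc k)
    then obtain z where "res k = K z" by blast
    then have "res (Suc k) = K (z - g (res k))" by (simp add: res_Suc K.diff)
    then show ?case by blast
  qed (use y res_0 in simp)
  have res_bound: "norm (res k) \<le> norm y * (1/2) ^ k" for k
  proof (induction k)
    case (Suc k)
    then show ?case using g [OF res_range [of k]] by (simp add: res_Suc)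
  qed (simp add: res_0)
  define u where "u k = g (res k)" for k
  have u: "norm (u k) \<le> A * norm y * (1/2) ^ k" for k
  proof -
    have "norm (u k) \<le> A * norm (res k)" using g [OF res_range [of k]] by (simp add: u_def)
    also have "\<dots> \<le> A * (norm y * (1/2) ^ k)" using A res_bound by (simp add: mult_left_mono)
    finally show ?thesis by (simp add: mult.assoc)
  qed
  have partial: "(\<Sum>k<m. K (u k)) = y - res m" for m
    by (induction m) (simp_all add: res_0 res_Suc u_def)
  have "res \<longlonglongrightarrow> 0"
  proof (rule Lim_null_comparison)
    show "\<forall>\<^sub>F k in sequentially. norm (res k) \<le> norm y * (1/2) ^ k"
      using res_bound by simp
    show "(\<lambda>k. norm y * (1/2::real) ^ k) \<longlonglongrightarrow> 0"
      by (intro tendsto_mult_right_zero LIMSEQ_power_zero) simp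
  qed
  then have "(\<lambda>m. y - res m) \<longlonglongrightarrow> y - 0" by (intro tendsto_intros)
  then have "(\<lambda>k. K (u k)) sums y" unfolding sums_def partial by simp
  then have "K (suminf u) = y"
    using K.suminf [OF summable_geometric_bound(1) [OF u]] sums_unique by metis
  moreover have "norm (suminf u) \<le> 2 * A * norm y"
    using summable_geometric_bound(2) [OF u] by simp
  ultimately show ?thesis by blast
qed

lemma closed_range_bounded_preimage:
  fixes K :: "'a::banach \<Rightarrow> 'b::banach"
  assumes K: "bounded_linear K" and closed: "closed (range K)"
  obtains C where "C > 0" "\<And>y. y \<in> range K \<Longrightarrow> \<exists>x. K x = y \<and> norm x \<le> C * norm y"
proof -
  obtain A where A: "A > 0"
    and "\<And>y. y \<in> range K \<Longrightarrow> \<exists>x. norm x \<le> A * norm y \<and> norm (y - K x) \<le> norm y / 2"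
    using closed_range_approximate_preimage [OF K closed] by metis
  then obtain g where g: "\<And>y. y \<in> range K \<Longrightarrow> norm (g y) \<le> A * norm y \<and> norm (y - K (g y)) \<le> norm y / 2"
    by metis
  have "\<exists>x. K x = y \<and> norm x \<le> (2 * A) * norm y" if "y \<in> range K" for y
    using iterated_approximate_preimage [OF K less_imp_le [OF A] g that] by simp
  then show ?thesis using that A by (metis mult_pos_pos zero_less_numeral)
qed

section \<open>The Moore--Penrose inverse\<close>

subclass (in chilbert_space) banach ..

definition moore_penrose :: "('a::complex_inner \<Rightarrow> 'b::complex_inner) \<Rightarrow> ('b \<Rightarrow> 'a) \<Rightarrow> bool" where
  "moore_penrose K B \<longleftrightarrow>
     K \<circ> B \<circ> K = K \<and> B \<circ> K \<circ> B = B \<and> selfadjoint_op (K \<circ> B) \<and> selfadjoint_op (B \<circ> K)"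

lemma mp_pinv_eq_The_moore_penrose:
  "mp_pinv K = (THE B. bounded_clinear B \<and> moore_penrose K B)"
  by (simp add: mp_pinv_def moore_penrose_def)

lemma moore_penrose_unique:
  assumes "moore_penrose K B1" "moore_penrose K B2"
  shows "B1 = B2"
proof -
  have KBK: "K (B1 (K x)) = K x" "K (B2 (K x)) = K x"
    and BKB: "B1 (K (B1 y)) = B1 y" "B2 (K (B2 y)) = B2 y" for x y
    using assms unfolding moore_penrose_def by (metis comp_apply)+
  have KB: "cinner (K (B1 u)) v = cinner u (K (B1 v))" "cinner (K (B2 u)) v = cinner u (K (B2 v))"
    and BK: "cinner (B1 (K x)) y = cinner x (B1 (K y))" "cinner (B2 (K x)) y = cinner x (B2 (K y))"
    for u v x y using assms by (simp_all add: moore_penrose_def selfadjoint_op_def)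
  have "K (B1 y) = K (B2 y)" for y
  proof (rule cinner_extensionality)
    fix h
    have "cinner (K (B1 y)) h = cinner (K (B2 (K (B1 y)))) h" by (simp add: KBK)
    also have "\<dots> = cinner y (K (B1 (K (B2 h))))" by (simp only: KB)
    also have "\<dots> = cinner (K (B2 y)) h" by (simp add: KBK KB)
    finally show "cinner (K (B1 y)) h = cinner (K (B2 y)) h" .
  qed
  moreover have "B1 (K x) = B2 (K x)" for x
  proof (rule cinner_extensionality)
    fix h
    have "cinner (B1 (K x)) h = cinner (B1 (K (B2 (K x)))) h" by (simp add: KBK)
    also have "\<dots> = cinner x (B2 (K (B1 (K h))))" by (simp only: BK)
    also have "\<dots> = cinner (B2 (K x)) h" by (simp add: KBK BK)
    finally show "cinner (B1 (K x)) h = cinner (B2 (K x)) h" .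
  qed
  ultimately have "B1 y = B2 y" for y
    by (metis BKB)
  then show ?thesis by blast
qed

lemma closed_csubspace_kernel:
  fixes K :: "'a::chilbert_space \<Rightarrow> 'b::complex_normed_vector"
  assumes "bounded_clinear K"
  shows "closed_csubspace {x. K x = 0}"
proof
  interpret K: bounded_linear K by (rule bounded_clinear_imp_bounded_linear [OF assms])
  show "complex_vector.subspace {x. K x = 0}"
    by (auto simp: complex_vector.subspace_def bounded_clinear_add [OF assms]
        bounded_clinear_scaleC [OF assms])
  show "closed {x. K x = 0}"
    by (intro closed_Collect_eq continuous_on_const K.continuous_on continuous_on_id)
qed

lemma closed_csubspace_range:
  fixes K :: "'a::complex_normed_vector \<Rightarrow> 'b::chilbert_space"
  assumes "bounded_clinear K" "closed (range K)"
  shows "closed_csubspace (range K)"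
proof
  interpret K: bounded_linear K by (rule bounded_clinear_imp_bounded_linear [OF assms(1)])
  show "complex_vector.subspace (range K)"
    unfolding complex_vector.subspace_def
    by (auto simp flip: bounded_clinear_add [OF assms(1)] bounded_clinear_scaleC [OF assms(1)]
        intro: K.zero [symmetric])
qed (rule assms(2))

lemma kernel_orthogonal_eqI:
  fixes K :: "'a::complex_inner \<Rightarrow> 'b::complex_normed_vector"
  assumes "bounded_clinear K" "K a = K b"
    and "\<And>s. K s = 0 \<Longrightarrow> cinner a s = 0" "\<And>s. K s = 0 \<Longrightarrow> cinner b s = 0"
  shows "a = b"
proof -
  have "K (a - b) = 0"
    using assms(2) by (simp add: bounded_clinear_diff [OF assms(1)])
  then have "cinner (a - b) (a - b) = 0" using assms(3,4) by (simp add: cinner_diff_left)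
  then show ?thesis by simp
qed

lemma closed_range_orthogonal_right_inverse:
  fixes K :: "'a::chilbert_space \<Rightarrow> 'b::chilbert_space"
  assumes K: "bounded_clinear K" and closed: "closed (range K)"
  obtains J where "bounded_clinear J" "\<And>y. K (J y) = cproj (range K) y"
    "\<And>y s. K s = 0 \<Longrightarrow> cinner (J y) s = 0"
proof -
  interpret K: bounded_linear K by (rule bounded_clinear_imp_bounded_linear [OF K])
  interpret R: closed_csubspace "range K" by (rule closed_csubspace_range [OF K closed])
  interpret N: closed_csubspace "{x. K x = 0}" by (rule closed_csubspace_kernel [OF K])
  obtain C where C: "C > 0" and "\<And>y. y \<in> range K \<Longrightarrow> \<exists>x. K x = y \<and> norm x \<le> C * norm y"
    using closed_range_bounded_preimage [OF K.bounded_linear_axioms closed] by metis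
  then obtain pre where pre: "\<And>y. y \<in> range K \<Longrightarrow> K (pre y) = y \<and> norm (pre y) \<le> C * norm y"
    by metis
  \<comment> \<open>the preimage of minimal norm: remove the component in the kernel\<close>
  define J where "J y = pre (cproj (range K) y) - cproj {x. K x = 0} (pre (cproj (range K) y))" for y
  have KJ: "K (J y) = cproj (range K) y" for y
    using pre [OF R.cproj_in] N.cproj_in by (simp add: J_def K.diff)
  have J_orth: "cinner (J y) s = 0" if "K s = 0" for y s
    using N.cinner_minus_cproj that by (simp add: J_def)
  have "J (a + b) = J a + J b" for a b
    by (rule kernel_orthogonal_eqI [OF K])
      (simp_all add: KJ K.add R.cproj_add J_orth cinner_add_left)
  moreover have "J (c *\<^sub>C a) = c *\<^sub>C J a" for c a
    by (rule kernel_orthogonal_eqI [OF K])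
      (simp_all add: KJ bounded_clinear_scaleC [OF K] R.cproj_scaleC J_orth cinner_scaleC_left)
  moreover have "norm (J y) \<le> norm y * C" for y
  proof -
    have "norm (J y) \<le> norm (pre (cproj (range K) y))" unfolding J_def by (rule N.norm_minus_cproj_le)
    also have "\<dots> \<le> C * norm (cproj (range K) y)" using pre [OF R.cproj_in] by blast
    also have "\<dots> \<le> C * norm y" using C R.norm_cproj_le by (simp add: mult_left_mono)
    finally show ?thesis by (simp add: mult.commute)
  qed
  ultimately have "bounded_clinear J" unfolding bounded_clinear_def by blast
  then show ?thesis using that KJ J_orth by blast
qed

lemma moore_penrose_exists:
  fixes K :: "'a::chilbert_space \<Rightarrow> 'b::chilbert_space"
  assumes K: "bounded_clinear K" and closed: "closed (range K)"
  shows "\<exists>J. bounded_clinear J \<and> moore_penrose K J"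
proof -
  interpret R: closed_csubspace "range K" by (rule closed_csubspace_range [OF K closed])
  interpret N: closed_csubspace "{x. K x = 0}" by (rule closed_csubspace_kernel [OF K])
  obtain J where J: "bounded_clinear J" and KJ: "\<And>y. K (J y) = cproj (range K) y"
    and J_orth: "\<And>y s. K s = 0 \<Longrightarrow> cinner (J y) s = 0"
    using closed_range_orthogonal_right_inverse [OF K closed] by blast
  have KJK: "K (J (K x)) = K x" for x by (simp add: KJ R.cproj_id)
  have JK: "J (K x) = x - cproj {x. K x = 0} x" for x
  proof (rule kernel_orthogonal_eqI [OF K])
    have "K (cproj {x. K x = 0} x) = 0" using N.cproj_in by simp
    then show "K (J (K x)) = K (x - cproj {x. K x = 0} x)"
      by (simp add: KJK bounded_clinear_diff [OF K])
  qed (simp_all add: J_orth N.cinner_minus_cproj)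
  have JKJ: "J (K (J y)) = J y" for y
    by (rule kernel_orthogonal_eqI [OF K]) (simp_all add: KJK J_orth)
  have "K \<circ> J \<circ> K = K" "J \<circ> K \<circ> J = J" by (auto simp: KJK JKJ)
  moreover have "selfadjoint_op (K \<circ> J)"
    by (simp add: selfadjoint_op_def KJ R.cinner_cproj_commute)
  moreover have "selfadjoint_op (J \<circ> K)"
    by (simp add: selfadjoint_op_def JK N.cinner_cproj_commute cinner_diff_left cinner_diff_right)
  ultimately have "moore_penrose K J" by (simp add: moore_penrose_def)
  with J show ?thesis by blast
qed

lemma mp_pinv_moore_penrose:
  fixes K :: "'a::chilbert_space \<Rightarrow> 'a"
  assumes "bounded_clinear K" "closed (range K)"
  shows "bounded_clinear (mp_pinv K) \<and> moore_penrose K (mp_pinv K)"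
  unfolding mp_pinv_eq_The_moore_penrose
  by (rule theI' [of "\<lambda>B. bounded_clinear B \<and> moore_penrose K B"])
    (use moore_penrose_exists [OF assms] moore_penrose_unique in blast)

lemma moore_penrose_cadjoint_identity:
  fixes K :: "'a::chilbert_space \<Rightarrow> 'b::chilbert_space"
  assumes K: "bounded_clinear K" and J: "bounded_clinear J" "moore_penrose K J"
  shows "K (cadjoint K (cadjoint J f)) = K f"
proof -
  have KJK: "K (J (K x)) = K x" and JK: "cinner (J (K x)) y = cinner x (J (K y))" for x y
    using J(2) unfolding moore_penrose_def selfadjoint_op_def by (metis comp_apply)+
  \<comment> \<open>J K is the projection onto the range of K*, so it fixes K* x\<close>
  have JKK: "J (K (cadjoint K x)) = cadjoint K x" for x
  proof (rule cinner_extensionality)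
    fix y
    have "cinner (J (K (cadjoint K x))) y = cinner x (K (J (K y)))"
      by (simp add: JK cinner_cadjoint_left [OF K])
    also have "\<dots> = cinner (cadjoint K x) y" by (simp add: KJK cinner_cadjoint_left [OF K])
    finally show "cinner (J (K (cadjoint K x))) y = cinner (cadjoint K x) y" .
  qed
  show ?thesis
  proof (rule cinner_extensionality)
    fix h
    have "cinner (K (cadjoint K (cadjoint J f))) h = cinner f (J (K (cadjoint K h)))"
      by (simp add: cinner_cadjoint [OF K, symmetric] cinner_cadjoint_left [OF K]
          cinner_cadjoint_left [OF J(1)])
    also have "\<dots> = cinner (K f) h" by (simp add: JKK cinner_cadjoint [OF K])
    finally show "cinner (K (cadjoint K (cadjoint J f))) h = cinner (K f) h" .
  qed
qed

section \<open>Square-integrable functions and the synthesis operator\<close>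

definition square_integrable :: "'a measure \<Rightarrow> ('a \<Rightarrow> complex) \<Rightarrow> bool" where
  "square_integrable M c \<longleftrightarrow>
     c \<in> borel_measurable M \<and> (\<integral>\<^sup>+\<omega>. ennreal ((cmod (c \<omega>))\<^sup>2) \<partial>M) < \<infinity>"

lemma square_integrable_mult:
  assumes a: "square_integrable M a" and b: "square_integrable M b"
  shows "integrable M (\<lambda>\<omega>. a \<omega> * b \<omega>)"
proof (rule integrableI_bounded)
  have [measurable]: "a \<in> borel_measurable M" "b \<in> borel_measurable M"
    using a b by (auto simp: square_integrable_def)
  show "(\<lambda>\<omega>. a \<omega> * b \<omega>) \<in> borel_measurable M" by measurable
  have "norm (a \<omega> * b \<omega>) \<le> (cmod (a \<omega>))\<^sup>2 + (cmod (b \<omega>))\<^sup>2" for \<omega>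
    using sum_squares_bound [of "cmod (a \<omega>)" "cmod (b \<omega>)"]
      mult_nonneg_nonneg [OF norm_ge_zero norm_ge_zero, of "a \<omega>" "b \<omega>"]
    unfolding norm_mult by (simp only: mult.assoc)
  then have "(\<integral>\<^sup>+\<omega>. ennreal (norm (a \<omega> * b \<omega>)) \<partial>M)
      \<le> (\<integral>\<^sup>+\<omega>. ennreal ((cmod (a \<omega>))\<^sup>2) + ennreal ((cmod (b \<omega>))\<^sup>2) \<partial>M)"
    by (intro nn_integral_mono) (simp flip: ennreal_plus)
  also have "\<dots> = (\<integral>\<^sup>+\<omega>. ennreal ((cmod (a \<omega>))\<^sup>2) \<partial>M) + (\<integral>\<^sup>+\<omega>. ennreal ((cmod (b \<omega>))\<^sup>2) \<partial>M)"
    by (intro nn_integral_add) auto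
  also have "\<dots> < \<infinity>" using a b by (simp add: square_integrable_def)
  finally show "(\<integral>\<^sup>+\<omega>. ennreal (norm (a \<omega> * b \<omega>)) \<partial>M) < \<infinity>" .
qed

lemma square_integrable_cnj:
  assumes "square_integrable M c"
  shows "square_integrable M (\<lambda>\<omega>. cnj (c \<omega>))"
proof -
  have "cnj \<in> borel_measurable borel"
    by (intro borel_measurable_continuous_onI continuous_intros)
  then have "(\<lambda>\<omega>. cnj (c \<omega>)) \<in> borel_measurable M"
    using assms measurable_compose [of c M borel cnj borel] by (simp add: square_integrable_def o_def)
  then show ?thesis using assms by (simp add: square_integrable_def)
qed

lemma integrable_cmod_square:
  "square_integrable M c \<Longrightarrow> integrable M (\<lambda>\<omega>. (cmod (c \<omega>))\<^sup>2)"
  by (rule integrableI_bounded) (auto simp: square_integrable_def)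

lemma integral_cmod_square:
  "square_integrable M c \<Longrightarrow>
     (\<integral>\<omega>. (cmod (c \<omega>))\<^sup>2 \<partial>M) = enn2real (\<integral>\<^sup>+\<omega>. ennreal ((cmod (c \<omega>))\<^sup>2) \<partial>M)"
  by (rule integral_eq_nn_integral) (auto simp: square_integrable_def)

lemma nn_integral_cmod_add_square_le:
  assumes [measurable]: "a \<in> borel_measurable M" "b \<in> borel_measurable M"
  shows "(\<integral>\<^sup>+\<omega>. ennreal ((cmod (a \<omega> + b \<omega>))\<^sup>2) \<partial>M)
     \<le> 2 * (\<integral>\<^sup>+\<omega>. ennreal ((cmod (a \<omega>))\<^sup>2) \<partial>M) + 2 * (\<integral>\<^sup>+\<omega>. ennreal ((cmod (b \<omega>))\<^sup>2) \<partial>M)"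
proof -
  have "(cmod (a \<omega> + b \<omega>))\<^sup>2 \<le> 2 * (cmod (a \<omega>))\<^sup>2 + 2 * (cmod (b \<omega>))\<^sup>2" for \<omega>
  proof -
    have "(cmod (a \<omega> + b \<omega>))\<^sup>2 \<le> (cmod (a \<omega>) + cmod (b \<omega>))\<^sup>2"
      by (simp add: norm_triangle_ineq power_mono)
    then show ?thesis
      using sum_squares_bound [of "cmod (a \<omega>)" "cmod (b \<omega>)"] by (simp add: power2_sum)
  qed
  then have "(\<integral>\<^sup>+\<omega>. ennreal ((cmod (a \<omega> + b \<omega>))\<^sup>2) \<partial>M)
      \<le> (\<integral>\<^sup>+\<omega>. 2 * ennreal ((cmod (a \<omega>))\<^sup>2) + 2 * ennreal ((cmod (b \<omega>))\<^sup>2) \<partial>M)"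
  proof (intro nn_integral_mono)
    fix \<omega>
    have "ennreal ((cmod (a \<omega> + b \<omega>))\<^sup>2) \<le> ennreal (2 * (cmod (a \<omega>))\<^sup>2 + 2 * (cmod (b \<omega>))\<^sup>2)"
      by (rule ennreal_leI) fact
    also have "\<dots> = 2 * ennreal ((cmod (a \<omega>))\<^sup>2) + 2 * ennreal ((cmod (b \<omega>))\<^sup>2)"
      by (simp add: ennreal_plus ennreal_mult)
    finally show "ennreal ((cmod (a \<omega> + b \<omega>))\<^sup>2)
        \<le> 2 * ennreal ((cmod (a \<omega>))\<^sup>2) + 2 * ennreal ((cmod (b \<omega>))\<^sup>2)" .
  qed
  also have "\<dots> = 2 * (\<integral>\<^sup>+\<omega>. ennreal ((cmod (a \<omega>))\<^sup>2) \<partial>M) + 2 * (\<integral>\<^sup>+\<omega>. ennreal ((cmod (b \<omega>))\<^sup>2) \<partial>M)"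
    by (simp add: nn_integral_add nn_integral_cmult)
  finally show ?thesis .
qed

lemma synth_op_eqI:
  assumes "\<And>h. cinner x h = (\<integral>\<omega>. c \<omega> * cinner (F \<omega>) h \<partial>M)"
  shows "synth_op M F c = x"
  unfolding synth_op_def
  by (rule the_equality) (use assms in \<open>auto intro: cinner_extensionality\<close>)

lemma synth_op_cong:
  assumes "\<And>\<omega>. \<omega> \<in> space M \<Longrightarrow> c \<omega> = d \<omega>"
  shows "synth_op M F c = synth_op M F d"
  unfolding synth_op_def using assms by (simp cong: Bochner_Integration.integral_cong)

lemma cont_bessel_square_integrable:
  assumes "cont_bessel M F"
  shows "square_integrable M (\<lambda>\<omega>. cinner f (F \<omega>))"
    and "square_integrable M (\<lambda>\<omega>. cinner (F \<omega>) f)"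
proof -
  obtain B where "\<And>f. (\<integral>\<^sup>+\<omega>. ennreal ((cmod (cinner f (F \<omega>)))\<^sup>2) \<partial>M) \<le> ennreal (B * (norm f)\<^sup>2)"
    using assms by (auto simp: cont_bessel_def)
  then show *: "square_integrable M (\<lambda>\<omega>. cinner f (F \<omega>))"
    using assms by (auto simp: square_integrable_def cont_bessel_def weakly_measurable_def
        intro: le_less_trans)
  show "square_integrable M (\<lambda>\<omega>. cinner (F \<omega>) f)"
    using square_integrable_cnj [OF *] by (simp flip: cinner_commute)
qed

lemma cont_bessel_integral_bound:
  assumes "cont_bessel M F"
  obtains B where "\<And>f. (\<integral>\<omega>. (cmod (cinner f (F \<omega>)))\<^sup>2 \<partial>M) \<le> B * (norm f)\<^sup>2"
proof -
  obtain B where B: "B > 0"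
    "\<And>f. (\<integral>\<^sup>+\<omega>. ennreal ((cmod (cinner f (F \<omega>)))\<^sup>2) \<partial>M) \<le> ennreal (B * (norm f)\<^sup>2)"
    using assms by (auto simp: cont_bessel_def)
  have "(\<integral>\<omega>. (cmod (cinner f (F \<omega>)))\<^sup>2 \<partial>M) \<le> B * (norm f)\<^sup>2" for f
    using B integral_cmod_square [OF cont_bessel_square_integrable(1) [OF assms]]
    by (simp add: enn2real_leI)
  then show ?thesis by (rule that)
qed

lemma mult_le_weighted_squares:
  fixes a b t :: real
  assumes "t > 0"
  shows "a * b \<le> t * a\<^sup>2 + b\<^sup>2 / t"
proof -
  have "2 * (a * b) \<le> t * a\<^sup>2 + b\<^sup>2 / t"
    using sum_squares_bound [of "sqrt t * a" "b / sqrt t"] assms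
    by (simp add: power_mult_distrib power_divide)
  moreover have "0 \<le> t * a\<^sup>2 + b\<^sup>2 / t" using assms by simp
  ultimately show ?thesis by linarith
qed

lemma norm_integral_synth_le:
  assumes F: "cont_bessel M F" and c: "square_integrable M c"
    and B: "\<And>f. (\<integral>\<omega>. (cmod (cinner f (F \<omega>)))\<^sup>2 \<partial>M) \<le> B * (norm f)\<^sup>2"
  shows "cmod (\<integral>\<omega>. c \<omega> * cinner (F \<omega>) x \<partial>M) \<le> norm x * ((\<integral>\<omega>. (cmod (c \<omega>))\<^sup>2 \<partial>M) + B)"
proof (cases "x = 0")
  case False
  note integrable = integrable_cmod_square [OF c]
    integrable_cmod_square [OF cont_bessel_square_integrable(1) [OF F]]
  \<comment> \<open>weighting by t = norm x balances the two terms\<close>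
  define t where "t = norm x"
  have t: "t > 0" using False by (simp add: t_def)
  have "cmod (\<integral>\<omega>. c \<omega> * cinner (F \<omega>) x \<partial>M) \<le> (\<integral>\<omega>. norm (c \<omega> * cinner (F \<omega>) x) \<partial>M)"
    by (rule integral_norm_bound)
  also have "\<dots> \<le> (\<integral>\<omega>. t * (cmod (c \<omega>))\<^sup>2 + (cmod (cinner x (F \<omega>)))\<^sup>2 / t \<partial>M)"
  proof (rule integral_mono)
    show "integrable M (\<lambda>\<omega>. norm (c \<omega> * cinner (F \<omega>) x))"
      using square_integrable_mult [OF c cont_bessel_square_integrable(2) [OF F]] by simp
    show "integrable M (\<lambda>\<omega>. t * (cmod (c \<omega>))\<^sup>2 + (cmod (cinner x (F \<omega>)))\<^sup>2 / t)"
      using integrable by simp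
    show "norm (c \<omega> * cinner (F \<omega>) x) \<le> t * (cmod (c \<omega>))\<^sup>2 + (cmod (cinner x (F \<omega>)))\<^sup>2 / t"
      for \<omega>
      using mult_le_weighted_squares [OF t, of "cmod (c \<omega>)" "cmod (cinner x (F \<omega>))"]
      by (metis cinner_commute complex_mod_cnj norm_mult)
  qed
  also have "\<dots> = t * (\<integral>\<omega>. (cmod (c \<omega>))\<^sup>2 \<partial>M) + (\<integral>\<omega>. (cmod (cinner x (F \<omega>)))\<^sup>2 \<partial>M) / t"
    using integrable by simp
  also have "\<dots> \<le> t * (\<integral>\<omega>. (cmod (c \<omega>))\<^sup>2 \<partial>M) + B * t\<^sup>2 / t"
    using B [of x] t by (simp add: t_def divide_right_mono)
  also have "\<dots> = norm x * ((\<integral>\<omega>. (cmod (c \<omega>))\<^sup>2 \<partial>M) + B)"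
    using t by (simp add: t_def power2_eq_square field_simps)
  finally show ?thesis .
qed simp

lemma cinner_synth_op:
  fixes F :: "'a \<Rightarrow> 'h::chilbert_space"
  assumes F: "cont_bessel M F" and c: "square_integrable M c"
  shows "cinner (synth_op M F c) h = (\<integral>\<omega>. c \<omega> * cinner (F \<omega>) h \<partial>M)"
proof -
  note integrable = square_integrable_mult [OF c cont_bessel_square_integrable(2) [OF F]]
  obtain B where B: "\<And>f. (\<integral>\<omega>. (cmod (cinner f (F \<omega>)))\<^sup>2 \<partial>M) \<le> B * (norm f)\<^sup>2"
    using cont_bessel_integral_bound [OF F] by blast
  define L where "L x = cnj (\<integral>\<omega>. c \<omega> * cinner (F \<omega>) x \<partial>M)" for x
  have "\<exists>z. \<forall>x. L x = cinner x z"
  proof (rule riesz_representation)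
    show "L (x + y) = L x + L y" for x y
      by (simp add: L_def cinner_add_right distrib_left integrable)
    show "L (a *\<^sub>C x) = a * L x" for a x
      by (simp add: L_def cinner_scaleC_right mult.left_commute)
    show "cmod (L x) \<le> norm x * ((\<integral>\<omega>. (cmod (c \<omega>))\<^sup>2 \<partial>M) + B)" for x
      unfolding L_def complex_mod_cnj by (rule norm_integral_synth_le [OF F c B])
  qed
  then obtain z where z: "\<And>x. L x = cinner x z" by blast
  have "synth_op M F c = z"
    by (rule synth_op_eqI) (metis L_def cinner_commute complex_cnj_cnj z)
  then show ?thesis by (metis L_def cinner_commute complex_cnj_cnj z)
qed
lemma synth_op_diff:
  fixes F :: "'a \<Rightarrow> 'h::chilbert_space"
  assumes F: "cont_bessel M F" and "square_integrable M a" "square_integrable M b"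
  shows "synth_op M F (\<lambda>\<omega>. a \<omega> - b \<omega>) = synth_op M F a - synth_op M F b"
proof (rule synth_op_eqI)
  fix h
  have "integrable M (\<lambda>\<omega>. a \<omega> * cinner (F \<omega>) h)" "integrable M (\<lambda>\<omega>. b \<omega> * cinner (F \<omega>) h)"
    using assms by (simp_all add: square_integrable_mult cont_bessel_square_integrable)
  then show "cinner (synth_op M F a - synth_op M F b) h
      = (\<integral>\<omega>. (a \<omega> - b \<omega>) * cinner (F \<omega>) h \<partial>M)"
    using assms by (simp add: cinner_diff_left cinner_synth_op left_diff_distrib)
qed

section \<open>Parseval continuous K-frames\<close>

definition sesquilinear :: "('a::complex_vector \<Rightarrow> 'a \<Rightarrow> complex) \<Rightarrow> bool" where
  "sesquilinear s \<longleftrightarrow>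
     (\<forall>x y z. s (x + y) z = s x z + s y z) \<and> (\<forall>x y z. s x (y + z) = s x y + s x z) \<and>
     (\<forall>a x y. s (a *\<^sub>C x) y = a * s x y) \<and> (\<forall>a x y. s x (a *\<^sub>C y) = cnj a * s x y)"

lemma sesquilinear_eq_on_diagonal:
  assumes "sesquilinear s" "sesquilinear t" "\<And>x. s x x = t x x"
  shows "s x y = t x y"
proof -
  define d where "d x y = s x y - t x y" for x y
  have d: "d (x + y) z = d x z + d y z" "d x (y + z) = d x y + d x z"
    "d (a *\<^sub>C x) y = a * d x y" "d x (a *\<^sub>C y) = cnj a * d x y" "d x x = 0" for a x y z
    using assms by (simp_all add: d_def sesquilinear_def algebra_simps)
  \<comment> \<open>polarization: expand d on the diagonal at x + y and at x + i y\<close>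
  have "d (x + y) (x + y) = d x y + d y x" by (simp add: d(1-4) d(5) [of x] d(5) [of y])
  then have "d x y + d y x = 0" by (simp only: d(5))
  moreover have "d (x + \<i> *\<^sub>C y) (x + \<i> *\<^sub>C y) = \<i> * (d y x - d x y)"
    by (simp add: d(1-4) d(5) [of x] d(5) [of y] algebra_simps)
  then have "\<i> * (d y x - d x y) = 0" by (simp only: d(5))
  ultimately have "d x y = 0" by (simp add: algebra_simps)
  then show ?thesis by (simp add: d_def)
qed

lemma parseval_cont_K_frame_cont_bessel:
  fixes K :: "'h::chilbert_space \<Rightarrow> 'h"
  assumes K: "bounded_clinear K" and F: "parseval_cont_K_frame M K F"
  shows "cont_bessel M F"
proof -
  obtain C where C: "C > 0" "\<And>x. norm (cadjoint K x) \<le> norm x * C"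
    using bounded_clinear_pos_bound [OF bounded_clinear_cadjoint [OF K]] by blast
  have "(norm (cadjoint K f))\<^sup>2 \<le> C\<^sup>2 * (norm f)\<^sup>2" for f
    using power_mono [OF C(2) [of f] norm_ge_zero, of 2] by (simp add: power_mult_distrib mult.commute)
  then have "(\<integral>\<^sup>+\<omega>. ennreal ((cmod (cinner f (F \<omega>)))\<^sup>2) \<partial>M) \<le> ennreal (C\<^sup>2 * (norm f)\<^sup>2)" for f
    using F by (simp add: parseval_cont_K_frame_def ennreal_leI)
  moreover have "C\<^sup>2 > 0" using C(1) by simp
  ultimately show ?thesis
    using F unfolding cont_bessel_def parseval_cont_K_frame_def by blast
qed

lemma parseval_cont_K_frame_polarization:
  fixes K :: "'h::chilbert_space \<Rightarrow> 'h"
  assumes K: "bounded_clinear K" and F: "parseval_cont_K_frame M K F"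
  shows "(\<integral>\<omega>. cinner g (F \<omega>) * cinner (F \<omega>) h \<partial>M) = cinner (cadjoint K g) (cadjoint K h)"
proof (rule sesquilinear_eq_on_diagonal [where s = "\<lambda>g h. \<integral>\<omega>. cinner g (F \<omega>) * cinner (F \<omega>) h \<partial>M"])
  note integrable = square_integrable_mult [OF cont_bessel_square_integrable
        [OF parseval_cont_K_frame_cont_bessel [OF K F]]]
  note K' = bounded_clinear_cadjoint [OF K]
  show "sesquilinear (\<lambda>g h. \<integral>\<omega>. cinner g (F \<omega>) * cinner (F \<omega>) h \<partial>M)"
    by (simp add: sesquilinear_def cinner_add_left cinner_add_right cinner_scaleC_left
        cinner_scaleC_right distrib_left distrib_right integrable mult.left_commute mult.assoc)
  show "sesquilinear (\<lambda>g h. cinner (cadjoint K g) (cadjoint K h))"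
    by (simp add: sesquilinear_def bounded_clinear_add [OF K'] bounded_clinear_scaleC [OF K']
        cinner_add_left cinner_add_right cinner_scaleC_left cinner_scaleC_right)
  show "(\<integral>\<omega>. cinner f (F \<omega>) * cinner (F \<omega>) f \<partial>M) = cinner (cadjoint K f) (cadjoint K f)" for f
  proof -
    have "cinner f (F \<omega>) * cinner (F \<omega>) f = complex_of_real ((cmod (cinner f (F \<omega>)))\<^sup>2)" for \<omega>
      by (metis cinner_commute complex_norm_square)
    then have "(\<integral>\<omega>. cinner f (F \<omega>) * cinner (F \<omega>) f \<partial>M)
        = complex_of_real (\<integral>\<omega>. (cmod (cinner f (F \<omega>)))\<^sup>2 \<partial>M)"
      by (simp only: integral_complex_of_real [symmetric])
    also have "\<dots> = cinner (cadjoint K f) (cadjoint K f)"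
      using F integral_cmod_square [OF cont_bessel_square_integrable(1)
          [OF parseval_cont_K_frame_cont_bessel [OF K F]]]
      by (simp add: parseval_cont_K_frame_def cinner_self)
    finally show ?thesis .
  qed
qed

lemma synth_op_analysis_parseval:
  fixes K :: "'h::chilbert_space \<Rightarrow> 'h"
  assumes K: "bounded_clinear K" and F: "parseval_cont_K_frame M K F"
  shows "synth_op M F (\<lambda>\<omega>. cinner g (F \<omega>)) = K (cadjoint K g)"
  by (rule synth_op_eqI)
    (simp add: parseval_cont_K_frame_polarization [OF K F] cinner_cadjoint [OF K])

lemma synth_op_analysis_mp_pinv:
  fixes K :: "'h::chilbert_space \<Rightarrow> 'h"
  assumes K: "bounded_clinear K" "closed (range K)" and F: "parseval_cont_K_frame M K F"
  shows "synth_op M F (\<lambda>\<omega>. cinner (cadjoint (mp_pinv K) f) (F \<omega>)) = K f"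
  using synth_op_analysis_parseval [OF K(1) F] moore_penrose_cadjoint_identity [OF K(1)]
    mp_pinv_moore_penrose [OF K] by simp

section \<open>Bounded operators into L2\<close>

lemma bounded_to_L2_cong:
  assumes "\<And>f \<omega>. \<omega> \<in> space M \<Longrightarrow> \<phi> f \<omega> = \<psi> f \<omega>"
  shows "bounded_to_L2 M \<phi> \<longleftrightarrow> bounded_to_L2 M \<psi>"
proof -
  have measurable: "\<phi> f \<in> borel_measurable M \<longleftrightarrow> \<psi> f \<in> borel_measurable M" for f
    using assms by (intro measurable_cong) auto
  moreover have add: "(AE \<omega> in M. \<phi> (f + g) \<omega> = \<phi> f \<omega> + \<phi> g \<omega>)
      \<longleftrightarrow> (AE \<omega> in M. \<psi> (f + g) \<omega> = \<psi> f \<omega> + \<psi> g \<omega>)" for f g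
    using assms by (intro AE_cong) auto
  moreover have scale: "(AE \<omega> in M. \<phi> (c *\<^sub>C f) \<omega> = c * \<phi> f \<omega>)
      \<longleftrightarrow> (AE \<omega> in M. \<psi> (c *\<^sub>C f) \<omega> = c * \<psi> f \<omega>)" for c f
    using assms by (intro AE_cong) auto
  moreover have norm: "(\<integral>\<^sup>+\<omega>. ennreal ((cmod (\<phi> f \<omega>))\<^sup>2) \<partial>M) = (\<integral>\<^sup>+\<omega>. ennreal ((cmod (\<psi> f \<omega>))\<^sup>2) \<partial>M)" for f
    using assms by (intro nn_integral_cong) auto
  ultimately show ?thesis
    unfolding bounded_to_L2_def by (simp only: measurable add scale norm)
qed

lemma bounded_to_L2_square_integrable:
  assumes "bounded_to_L2 M \<phi>"
  shows "square_integrable M (\<phi> f)"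
proof -
  obtain C where "(\<integral>\<^sup>+\<omega>. ennreal ((cmod (\<phi> f \<omega>))\<^sup>2) \<partial>M) \<le> ennreal ((C * norm f)\<^sup>2)"
    using assms unfolding bounded_to_L2_def by blast
  then have "(\<integral>\<^sup>+\<omega>. ennreal ((cmod (\<phi> f \<omega>))\<^sup>2) \<partial>M) < \<infinity>"
    by (rule le_less_trans) simp
  then show ?thesis
    using assms by (simp add: bounded_to_L2_def square_integrable_def)
qed

lemma bounded_to_L2_add:
  assumes \<phi>: "bounded_to_L2 M \<phi>" and \<psi>: "bounded_to_L2 M \<psi>"
  shows "bounded_to_L2 M (\<lambda>f \<omega>. \<phi> f \<omega> + \<psi> f \<omega>)"
  unfolding bounded_to_L2_def
proof (intro conjI allI)
  have [measurable]: "\<phi> f \<in> borel_measurable M" "\<psi> f \<in> borel_measurable M" for f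
    using \<phi> \<psi> by (simp_all add: bounded_to_L2_def)
  show "(\<lambda>\<omega>. \<phi> f \<omega> + \<psi> f \<omega>) \<in> borel_measurable M" for f by measurable
  show "AE \<omega> in M. \<phi> (f + g) \<omega> + \<psi> (f + g) \<omega> = \<phi> f \<omega> + \<psi> f \<omega> + (\<phi> g \<omega> + \<psi> g \<omega>)" for f g
  proof -
    have "AE \<omega> in M. \<phi> (f + g) \<omega> = \<phi> f \<omega> + \<phi> g \<omega>" "AE \<omega> in M. \<psi> (f + g) \<omega> = \<psi> f \<omega> + \<psi> g \<omega>"
      using \<phi> \<psi> by (simp_all add: bounded_to_L2_def)
    then show ?thesis by eventually_elim simp
  qed
  show "AE \<omega> in M. \<phi> (c *\<^sub>C f) \<omega> + \<psi> (c *\<^sub>C f) \<omega> = c * (\<phi> f \<omega> + \<psi> f \<omega>)" for c f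
  proof -
    have "AE \<omega> in M. \<phi> (c *\<^sub>C f) \<omega> = c * \<phi> f \<omega>" "AE \<omega> in M. \<psi> (c *\<^sub>C f) \<omega> = c * \<psi> f \<omega>"
      using \<phi> \<psi> by (simp_all add: bounded_to_L2_def)
    then show ?thesis by eventually_elim (simp add: distrib_left)
  qed
  obtain C where C: "\<And>f. (\<integral>\<^sup>+\<omega>. ennreal ((cmod (\<phi> f \<omega>))\<^sup>2) \<partial>M) \<le> ennreal ((C * norm f)\<^sup>2)"
    using \<phi> unfolding bounded_to_L2_def by blast
  obtain D where D: "\<And>f. (\<integral>\<^sup>+\<omega>. ennreal ((cmod (\<psi> f \<omega>))\<^sup>2) \<partial>M) \<le> ennreal ((D * norm f)\<^sup>2)"
    using \<psi> unfolding bounded_to_L2_def by blast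
  have "(\<integral>\<^sup>+\<omega>. ennreal ((cmod (\<phi> f \<omega> + \<psi> f \<omega>))\<^sup>2) \<partial>M)
      \<le> ennreal ((sqrt (2 * C\<^sup>2 + 2 * D\<^sup>2) * norm f)\<^sup>2)" for f
  proof -
    have "(\<integral>\<^sup>+\<omega>. ennreal ((cmod (\<phi> f \<omega> + \<psi> f \<omega>))\<^sup>2) \<partial>M)
        \<le> 2 * ennreal ((C * norm f)\<^sup>2) + 2 * ennreal ((D * norm f)\<^sup>2)"
      by (rule order_trans [OF nn_integral_cmod_add_square_le])
        (auto intro!: add_mono mult_left_mono C D)
    also have "\<dots> = ennreal (2 * (C * norm f)\<^sup>2 + 2 * (D * norm f)\<^sup>2)"
      by (simp add: ennreal_plus ennreal_mult)
    also have "\<dots> = ennreal ((sqrt (2 * C\<^sup>2 + 2 * D\<^sup>2) * norm f)\<^sup>2)"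
      by (simp add: power_mult_distrib algebra_simps)
    finally show ?thesis .
  qed
  then show "\<exists>C. \<forall>f. (\<integral>\<^sup>+\<omega>. ennreal ((cmod (\<phi> f \<omega> + \<psi> f \<omega>))\<^sup>2) \<partial>M) \<le> ennreal ((C * norm f)\<^sup>2)"
    by blast
qed

lemma bounded_to_L2_uminus:
  assumes "bounded_to_L2 M \<phi>"
  shows "bounded_to_L2 M (\<lambda>f \<omega>. - \<phi> f \<omega>)"
proof -
  have "AE \<omega> in M. - \<phi> (f + g) \<omega> = - \<phi> f \<omega> + - \<phi> g \<omega>" for f g
  proof -
    have "AE \<omega> in M. \<phi> (f + g) \<omega> = \<phi> f \<omega> + \<phi> g \<omega>"
      using assms by (simp add: bounded_to_L2_def)
    then show ?thesis by eventually_elim simp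
  qed
  moreover have "AE \<omega> in M. - \<phi> (c *\<^sub>C f) \<omega> = c * - \<phi> f \<omega>" for c f
  proof -
    have "AE \<omega> in M. \<phi> (c *\<^sub>C f) \<omega> = c * \<phi> f \<omega>"
      using assms by (simp add: bounded_to_L2_def)
    then show ?thesis by eventually_elim simp
  qed
  ultimately show ?thesis
    using assms unfolding bounded_to_L2_def by simp
qed

lemma bounded_to_L2_diff:
  "bounded_to_L2 M \<phi> \<Longrightarrow> bounded_to_L2 M \<psi> \<Longrightarrow> bounded_to_L2 M (\<lambda>f \<omega>. \<phi> f \<omega> - \<psi> f \<omega>)"
  using bounded_to_L2_add [OF _ bounded_to_L2_uminus, of M \<phi> \<psi>] by simp

lemma bounded_to_L2_comp:
  assumes \<phi>: "bounded_to_L2 M \<phi>" and A: "bounded_clinear A"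
  shows "bounded_to_L2 M (\<lambda>f. \<phi> (A f))"
proof -
  obtain D where D: "D > 0" "\<And>x. norm (A x) \<le> norm x * D"
    using bounded_clinear_pos_bound [OF A] by blast
  obtain C where C: "\<And>f. (\<integral>\<^sup>+\<omega>. ennreal ((cmod (\<phi> f \<omega>))\<^sup>2) \<partial>M) \<le> ennreal ((C * norm f)\<^sup>2)"
    using \<phi> unfolding bounded_to_L2_def by metis
  have "(\<integral>\<^sup>+\<omega>. ennreal ((cmod (\<phi> (A f) \<omega>))\<^sup>2) \<partial>M) \<le> ennreal ((\<bar>C\<bar> * D * norm f)\<^sup>2)" for f
  proof -
    have "\<bar>C\<bar> * norm (A f) \<le> \<bar>C\<bar> * (norm f * D)"
      using D(2) [of f] by (rule mult_left_mono) simp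
    then have "\<bar>C * norm (A f)\<bar> \<le> \<bar>C\<bar> * D * norm f"
      by (simp add: abs_mult mult_ac)
    then have "(C * norm (A f))\<^sup>2 \<le> (\<bar>C\<bar> * D * norm f)\<^sup>2"
      by (metis abs_le_square_iff abs_of_nonneg D(1) abs_ge_zero mult_nonneg_nonneg norm_ge_zero
          less_imp_le)
    then show ?thesis using C [of "A f"] by (meson ennreal_leI order_trans)
  qed
  then show ?thesis
    using \<phi> unfolding bounded_to_L2_def
    by (auto simp: bounded_clinear_add [OF A] bounded_clinear_scaleC [OF A])
qed

lemma bounded_to_L2_cinner_iff_cont_bessel:
  assumes "weakly_measurable M G"
  shows "bounded_to_L2 M (\<lambda>f \<omega>. cinner f (G \<omega>)) \<longleftrightarrow> cont_bessel M G"
proof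
  assume "bounded_to_L2 M (\<lambda>f \<omega>. cinner f (G \<omega>))"
  then obtain C where "\<And>f. (\<integral>\<^sup>+\<omega>. ennreal ((cmod (cinner f (G \<omega>)))\<^sup>2) \<partial>M) \<le> ennreal ((C * norm f)\<^sup>2)"
    unfolding bounded_to_L2_def by metis
  then have "(\<integral>\<^sup>+\<omega>. ennreal ((cmod (cinner f (G \<omega>)))\<^sup>2) \<partial>M) \<le> ennreal ((C\<^sup>2 + 1) * (norm f)\<^sup>2)" for f
    by (rule order_trans) (simp add: ennreal_leI power_mult_distrib mult_right_mono)
  moreover have "C\<^sup>2 + 1 > 0" by (simp add: add_nonneg_pos)
  ultimately show "cont_bessel M G"
    using assms unfolding cont_bessel_def by blast
next
  assume "cont_bessel M G"
  then obtain B where "\<And>f. (\<integral>\<^sup>+\<omega>. ennreal ((cmod (cinner f (G \<omega>)))\<^sup>2) \<partial>M) \<le> ennreal (B * (norm f)\<^sup>2)"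
    "B > 0"
    unfolding cont_bessel_def by blast
  then have "(\<integral>\<^sup>+\<omega>. ennreal ((cmod (cinner f (G \<omega>)))\<^sup>2) \<partial>M) \<le> ennreal ((sqrt B * norm f)\<^sup>2)" for f
    by (simp add: power_mult_distrib)
  then show "bounded_to_L2 M (\<lambda>f \<omega>. cinner f (G \<omega>))"
    using assms unfolding bounded_to_L2_def weakly_measurable_def
    by (auto simp: cinner_add_left cinner_scaleC_left)
qed

lemma ex_bounded_to_L2_eq_on_space_iff:
  "(\<exists>\<phi>. bounded_to_L2 M \<phi> \<and> (\<forall>f. synth_op M F (\<phi> f) = 0) \<and>
       (\<forall>f. \<forall>\<omega>\<in>space M. \<phi> f \<omega> = \<psi> f \<omega>))
    \<longleftrightarrow> bounded_to_L2 M \<psi> \<and> (\<forall>f. synth_op M F (\<psi> f) = 0)"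
proof
  assume "\<exists>\<phi>. bounded_to_L2 M \<phi> \<and> (\<forall>f. synth_op M F (\<phi> f) = 0) \<and>
    (\<forall>f. \<forall>\<omega>\<in>space M. \<phi> f \<omega> = \<psi> f \<omega>)"
  then obtain \<phi> where "bounded_to_L2 M \<phi>" "\<And>f. synth_op M F (\<phi> f) = 0"
    and "\<And>f \<omega>. \<omega> \<in> space M \<Longrightarrow> \<phi> f \<omega> = \<psi> f \<omega>"
    by blast
  then show "bounded_to_L2 M \<psi> \<and> (\<forall>f. synth_op M F (\<psi> f) = 0)"
    using bounded_to_L2_cong [of M \<phi> \<psi>] synth_op_cong [of M "\<phi> _" "\<psi> _" F] by metis
qed blast

section \<open>Dual continuous K-Bessel sequences\<close>

lemma cinner_minus_mp_pinv:
  fixes K :: "'h::chilbert_space \<Rightarrow> 'h"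
  assumes "bounded_clinear K" "closed (range K)"
  shows "cinner f (g - mp_pinv K x) = cinner f g - cinner (cadjoint (mp_pinv K) f) x"
  using mp_pinv_moore_penrose [OF assms] by (simp add: cinner_diff_right cinner_cadjoint_left)

lemma bounded_to_L2_analysis_mp_pinv:
  fixes K :: "'h::chilbert_space \<Rightarrow> 'h"
  assumes K: "bounded_clinear K" "closed (range K)" and F: "parseval_cont_K_frame M K F"
  shows "bounded_to_L2 M (\<lambda>f \<omega>. cinner (cadjoint (mp_pinv K) f) (F \<omega>))"
proof (rule bounded_to_L2_comp)
  show "bounded_to_L2 M (\<lambda>f \<omega>. cinner f (F \<omega>))"
    using F parseval_cont_K_frame_cont_bessel [OF K(1) F]
    by (simp add: bounded_to_L2_cinner_iff_cont_bessel parseval_cont_K_frame_def)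
  show "bounded_clinear (cadjoint (mp_pinv K))"
    using mp_pinv_moore_penrose [OF K] by (simp add: bounded_clinear_cadjoint)
qed

lemma bounded_to_L2_dual_difference_iff:
  fixes K :: "'h::chilbert_space \<Rightarrow> 'h"
  assumes K: "bounded_clinear K" "closed (range K)" and F: "parseval_cont_K_frame M K F"
    and G: "weakly_measurable M G"
  shows "bounded_to_L2 M (\<lambda>f \<omega>. cinner f (G \<omega> - mp_pinv K (F \<omega>))) \<longleftrightarrow> cont_bessel M G"
  unfolding bounded_to_L2_cinner_iff_cont_bessel [OF G, symmetric] cinner_minus_mp_pinv [OF K]
  using bounded_to_L2_add [OF _ bounded_to_L2_analysis_mp_pinv [OF K F]]
    bounded_to_L2_diff [OF _ bounded_to_L2_analysis_mp_pinv [OF K F]]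
  by fastforce

lemma synth_op_dual_difference:
  fixes K :: "'h::chilbert_space \<Rightarrow> 'h"
  assumes K: "bounded_clinear K" "closed (range K)" and F: "parseval_cont_K_frame M K F"
    and G: "cont_bessel M G"
  shows "synth_op M F (\<lambda>\<omega>. cinner f (G \<omega> - mp_pinv K (F \<omega>)))
    = synth_op M F (\<lambda>\<omega>. cinner f (G \<omega>)) - K f"
  using synth_op_diff [OF parseval_cont_K_frame_cont_bessel [OF K(1) F]
      cont_bessel_square_integrable(1) [OF G]
      bounded_to_L2_square_integrable [OF bounded_to_L2_analysis_mp_pinv [OF K F]]]
  by (simp add: cinner_minus_mp_pinv [OF K] synth_op_analysis_mp_pinv [OF K F])

theorem lemma3p3:
  fixes M :: "'a measure" and K :: "'h::chilbert_space \<Rightarrow> 'h" and F G :: "'a \<Rightarrow> 'h"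
  assumes "bounded_clinear K"
    and "closed (range K)"
    and "parseval_cont_K_frame M K F"
    and "weakly_measurable M G"
  shows "dual_cont_K_bessel M K F G \<longleftrightarrow>
    (\<exists>\<phi>. bounded_to_L2 M \<phi> \<and> (\<forall>f. synth_op M F (\<phi> f) = 0) \<and>
         (\<forall>f. \<forall>\<omega>\<in>space M. \<phi> f \<omega> = cinner f (G \<omega> - mp_pinv K (F \<omega>))))"
proof -
  let ?\<psi> = "\<lambda>f \<omega>. cinner f (G \<omega> - mp_pinv K (F \<omega>))"
  have "(\<exists>\<phi>. bounded_to_L2 M \<phi> \<and> (\<forall>f. synth_op M F (\<phi> f) = 0) \<and>
         (\<forall>f. \<forall>\<omega>\<in>space M. \<phi> f \<omega> = ?\<psi> f \<omega>))
      \<longleftrightarrow> cont_bessel M G \<and> (\<forall>f. synth_op M F (?\<psi> f) = 0)"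
    unfolding ex_bounded_to_L2_eq_on_space_iff bounded_to_L2_dual_difference_iff [OF assms] ..
  also have "\<dots> \<longleftrightarrow> dual_cont_K_bessel M K F G"
    using synth_op_dual_difference [OF assms(1-3)]
    by (auto simp: dual_cont_K_bessel_def)
  finally show ?thesis by simp
qed

end
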